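(* Let $k\ge1$ and let $S_1,\dots,S_k\in\mathcal{B}_A(\mathcal{H})$. Then for every positive integer $n$, $$\omega_A^{4n}\Big(\sum_{i=1}^kS_i\Big)\le\frac{k^{4n-1}}{4}\left[\Big\|\sum_{i=1}^k\Big(\big(S_i^{\sharp_A}S_i\big)^{2n}+\big(S_iS_i^{\sharp_A}\big)^{2n}\Big)\Big\|_A+2\sum_{i=1}^k\omega_A\Big(\big(S_i^{\sharp_A}S_i\big)^{n}\big(S_iS_i^{\sharp_A}\big)^{n}\Big)\right].$$
   Context: $\mathcal{H}$ is a complex Hilbert space with inner product $\langle\cdot,\cdot\rangle$, and $A$ is a fixed nonzero positive bounded operator on $\mathcal{H}$. Set $\langle x,y\rangle_A=\langle Ax,y\rangle$ and $\|x\|_A=\|A^{1/2}x\|$. $\mathcal{B}_A(\mathcal{H})$ is the set of bounded operators $T$ for which there exists a bounded $S$ with $\langle Tx,y\rangle_A=\langle x,Sy\rangle_A$ for all $x,y$ (equivalently $\mathcal{R}(T^*A)\subseteq\mathcal{R}(A)$). For $T\in\mathcal{B}_A(\mathcal{H})$, $T^{\sharp_A}=A^\dagger T^*A$ ($A^\dagger$ the Moore–Penrose inverse) is the reduced solution of $AX=T^*A$. For an operator $T$ with $\|Tx\|_A\le\lambda\|x\|_A$ for some $\lambda>0$ and all $x$, $\|T\|_A=\sup\{\|Tx\|_A: \|x\|_A=1\}$, and $\omega_A(T)=\sup\{|\langle Tx,x\rangle_A|:\|x\|_A=1\}$. *)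

theory Defs
  imports "HOL-Analysis.Analysis"
begin

class complex_inner = real_normed_vector +
  fixes scaleC :: "complex \<Rightarrow> 'a \<Rightarrow> 'a"
    and cinner :: "'a \<Rightarrow> 'a \<Rightarrow> complex"
  assumes scaleC_add_right: "scaleC a (x + y) = scaleC a x + scaleC a y"
    and scaleC_add_left: "scaleC (a + b) x = scaleC a x + scaleC b x"
    and scaleC_scaleC: "scaleC a (scaleC b x) = scaleC (a * b) x"
    and scaleC_one: "scaleC 1 x = x"
    and scaleR_scaleC: "scaleR r x = scaleC (complex_of_real r) x"
    and cinner_commute: "cinner x y = cnj (cinner y x)"
    and cinner_add_left: "cinner (x + y) z = cinner x z + cinner y z"
    and cinner_scaleC_left: "cinner (scaleC a x) y = a * cinner x y"
    and cinner_ge_zero: "0 \<le> Re (cinner x x)"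
    and cinner_eq_zero_iff: "cinner x x = 0 \<longleftrightarrow> x = 0"
    and norm_eq_sqrt_cinner: "norm x = sqrt (Re (cinner x x))"

class chilbert_space = complex_inner + complete_space

definition bounded_clinear :: "('a::complex_inner \<Rightarrow> 'a) \<Rightarrow> bool" where
  "bounded_clinear T \<longleftrightarrow> bounded_linear T \<and> (\<forall>c x. T (scaleC c x) = scaleC c (T x))"

text \<open>Hilbert-space adjoint \<open>T\<^sup>*\<close> (unique when it exists).\<close>
definition adj :: "('a::complex_inner \<Rightarrow> 'a) \<Rightarrow> ('a \<Rightarrow> 'a)" where
  "adj T = (THE S. \<forall>x y. cinner (T x) y = cinner x (S y))"

definition positive_op :: "('a::complex_inner \<Rightarrow> 'a) \<Rightarrow> bool" where
  "positive_op A \<longleftrightarrow> bounded_clinear A \<and>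
     (\<forall>x. Im (cinner (A x) x) = 0 \<and> 0 \<le> Re (cinner (A x) x))"

definition innerA :: "('a::complex_inner \<Rightarrow> 'a) \<Rightarrow> 'a \<Rightarrow> 'a \<Rightarrow> complex" where
  "innerA A x y = cinner (A x) y"

definition normA :: "('a::complex_inner \<Rightarrow> 'a) \<Rightarrow> 'a \<Rightarrow> real" where
  "normA A x = sqrt (Re (cinner (A x) x))"

definition BA :: "('a::complex_inner \<Rightarrow> 'a) \<Rightarrow> ('a \<Rightarrow> 'a) set" where
  "BA A = {T. bounded_clinear T \<and>
     (\<exists>S. bounded_clinear S \<and> (\<forall>x y. innerA A (T x) y = innerA A x (S y)))}"

text \<open>Moore--Penrose inverse of A, evaluated on the range of A:
  \<open>A\<^sup>\<dagger> y\<close> is the unique x in \<open>N(A)\<^sup>\<bottom>\<close> with \<open>A x = y\<close>.\<close>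
definition mp_inv :: "('a::complex_inner \<Rightarrow> 'a) \<Rightarrow> 'a \<Rightarrow> 'a" where
  "mp_inv A y = (THE x. (\<forall>z. A z = 0 \<longrightarrow> cinner x z = 0) \<and> A x = y)"

definition sharpA :: "('a::complex_inner \<Rightarrow> 'a) \<Rightarrow> ('a \<Rightarrow> 'a) \<Rightarrow> ('a \<Rightarrow> 'a)" where
  "sharpA A T = (\<lambda>x. mp_inv A (adj T (A x)))"

definition opnormA :: "('a::complex_inner \<Rightarrow> 'a) \<Rightarrow> ('a \<Rightarrow> 'a) \<Rightarrow> real" where
  "opnormA A T = Sup {normA A (T x) | x. normA A x = 1}"

definition numradA :: "('a::complex_inner \<Rightarrow> 'a) \<Rightarrow> ('a \<Rightarrow> 'a) \<Rightarrow> real" where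
  "numradA A T = Sup {cmod (innerA A (T x) x) | x. normA A x = 1}"

end

theory Submission
  imports Defs
begin

(* Fix a unit vector x and one operator S, and put P = S#S, Q = SS#. Cauchy-Schwarz gives
   |<Sx,x>_A|^2 <= <Px,x>_A and |<Sx,x>_A|^2 = |<x,S#x>_A|^2 <= <Qx,x>_A. Since P factors
   through S, the sequence m |-> <P^m x,x>_A is log-convex, so <Px,x>_A^n <= <P^n x,x>_A, and
   likewise for Q. Buzano's inequality followed by AM-GM bounds <P^n x,x>_A <x,Q^n x>_A by
   1/4 (<P^2n x,x>_A + <Q^2n x,x>_A + 2 |<P^n Q^n x,x>_A|). For k operators the power-mean
   inequality (t_1 + ... + t_k)^4n <= k^(4n-1) (t_1^4n + ... + t_k^4n) finishes the estimate.

   The rest makes the objects meaningful: the projection theorem yields the Hilbert adjoint and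
   the Moore-Penrose inverse, so S# = A^+ S* A is an A-adjoint of S, and Lax's iteration shows
   that an operator with a bounded A-adjoint is A-bounded, so the suprema defining ||.||_A and
   w_A bound the quantities above. *)

section \<open>Elementary real inequalities\<close>

lemma sum_power_le_card_power_sum:
  fixes f :: "'i \<Rightarrow> real"
  assumes "finite I" and "even m" and "0 < m"
  shows "(\<Sum>i\<in>I. f i) ^ m \<le> real (card I) ^ (m - 1) * (\<Sum>i\<in>I. f i ^ m)"
proof (cases "I = {}")
  case False
  define c where "c = real (card I)"
  have c: "0 < c" using assms(1) False by (simp add: c_def card_gt_0_iff)
  have "(\<Sum>i\<in>I. (1 / c) *\<^sub>R f i) ^ m \<le> (\<Sum>i\<in>I. 1 / c * f i ^ m)"
    using c by (intro convex_on_sum[OF assms(1) False convex_power_even[OF assms(2)]])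
      (simp_all add: c_def)
  then have "(\<Sum>i\<in>I. f i) ^ m / c ^ m \<le> (\<Sum>i\<in>I. f i ^ m) / c"
    by (simp add: power_divide flip: sum_divide_distrib)
  moreover have "c ^ m = c ^ (m - 1) * c"
    using \<open>0 < m\<close> by (simp flip: power_Suc2)
  ultimately show ?thesis
    using c by (simp add: c_def divide_simps mult_ac split: if_splits)
qed (use assms in \<open>simp add: power_0_left\<close>)

lemma log_convex_power_le:
  fixes g :: "nat \<Rightarrow> real"
  assumes nonneg: "\<And>m. 0 \<le> g m" and "g 0 = 1"
    and log_convex: "\<And>m. g (Suc m) ^ 2 \<le> g m * g (Suc (Suc m))"
  shows "g 1 ^ n \<le> g n"
proof -
  have ratio: "g 1 * g k \<le> g (Suc k)" for k
  proof (induction k)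
    case (Suc k)
    show ?case
    proof (cases "g k = 0")
      case True
      then show ?thesis using log_convex[of k] nonneg by simp
    next
      case False
      then have "0 < g k" using nonneg[of k] by simp
      have "g k * (g 1 * g (Suc k)) = g (Suc k) * (g 1 * g k)" by (simp add: mult_ac)
      also have "\<dots> \<le> g (Suc k) * g (Suc k)" using Suc.IH nonneg by (intro mult_left_mono)
      also have "\<dots> \<le> g k * g (Suc (Suc k))" using log_convex[of k] by (simp add: power2_eq_square)
      finally show ?thesis using \<open>0 < g k\<close> by simp
    qed
  qed (simp add: \<open>g 0 = 1\<close>)
  show ?thesis
  proof (induction n)
    case (Suc n)
    have "g 1 ^ Suc n \<le> g 1 * g n" using Suc.IH nonneg[of 1] by (simp add: mult_left_mono)
    also have "\<dots> \<le> g (Suc n)" by (rule ratio)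
    finally show ?case .
  qed (simp add: \<open>g 0 = 1\<close>)
qed

lemma le_one_if_two_power_bounded:
  fixes q L :: real
  assumes "\<And>j. q ^ (2 ^ j) \<le> L"
  shows "q \<le> 1"
proof (rule ccontr)
  assume "\<not> q \<le> 1"
  then obtain j where "L < q ^ j" using real_arch_pow by force
  also have "\<dots> \<le> q ^ (2 ^ j)" using \<open>\<not> q \<le> 1\<close> by (intro power_increasing) simp_all
  finally show False using assms[of j] by simp
qed

lemma cSup_power_le:
  fixes E :: "real set"
  assumes "E \<noteq> {}" and "0 < m" and nonneg: "\<And>e. e \<in> E \<Longrightarrow> 0 \<le> e"
    and bound: "\<And>e. e \<in> E \<Longrightarrow> e ^ m \<le> R"
  shows "Sup E ^ m \<le> R"
proof -
  obtain e0 where "e0 \<in> E" using assms(1) by blast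
  have "0 \<le> R"
    using bound[OF \<open>e0 \<in> E\<close>] nonneg[OF \<open>e0 \<in> E\<close>] by (meson order_trans zero_le_power)
  have le_root: "e \<le> root m R" if "e \<in> E" for e
    using real_root_le_mono[OF \<open>0 < m\<close> bound[OF that]] nonneg[OF that] \<open>0 < m\<close>
    by (simp add: real_root_power_cancel)
  then have "Sup E \<le> root m R" by (intro cSup_least[OF assms(1)])
  moreover have "0 \<le> Sup E"
    using nonneg[OF \<open>e0 \<in> E\<close>] cSup_upper[OF \<open>e0 \<in> E\<close>] le_root
    by (meson bdd_above_def order_trans)
  ultimately have "Sup E ^ m \<le> root m R ^ m" by (intro power_mono)
  then show ?thesis using \<open>0 < m\<close> \<open>0 \<le> R\<close> by simp
qed

section \<open>Hermitian forms\<close>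

locale hermitian_form =
  fixes B :: "'a::complex_inner \<Rightarrow> 'a \<Rightarrow> complex"
  assumes add_left: "B (u + v) w = B u w + B v w"
    and scaleC_left: "B (scaleC c u) w = c * B u w"
    and conj_sym: "B v u = cnj (B u v)"
    and Re_self_nonneg: "0 \<le> Re (B u u)"
begin

lemma diff_left: "B (u - v) w = B u w - B v w"
  using add_left[of "u - v" v w] by simp

lemma zero_left [simp]: "B 0 w = 0"
  using diff_left[of 0 0 w] by simp

lemma sum_left: "B (\<Sum>i\<in>I. f i) w = (\<Sum>i\<in>I. B (f i) w)"
  by (induction I rule: infinite_finite_induct) (simp_all add: add_left)

lemma add_right: "B w (u + v) = B w u + B w v"
  by (metis conj_sym add_left complex_cnj_add)

lemma diff_right: "B w (u - v) = B w u - B w v"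
  by (metis conj_sym diff_left complex_cnj_diff)

lemma zero_right [simp]: "B w 0 = 0"
  using conj_sym[of 0 w] by simp

lemma scaleC_right: "B w (scaleC c u) = cnj c * B w u"
  by (metis conj_sym scaleC_left complex_cnj_mult)

lemma self_eq_Re: "B u u = of_real (Re (B u u))"
  using conj_sym[of u u] by (simp add: complex_eq_iff)

lemma self_diff_scaleC:
  "B (u - scaleC s v) (u - scaleC s v)
    = B u u - cnj s * B u v - s * cnj (B u v) + s * cnj s * B v v"
  by (simp add: diff_left diff_right scaleC_left scaleC_right conj_sym[of u v] algebra_simps)

lemma Re_self_diff_scaleC:
  "Re (B (u - scaleC (of_real t * B u v) v) (u - scaleC (of_real t * B u v) v))
    = Re (B u u) - 2 * t * cmod (B u v) ^ 2 + t\<^sup>2 * cmod (B u v) ^ 2 * Re (B v v)"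
  unfolding self_diff_scaleC cmod_power2
  by (subst self_eq_Re[of v]) (simp add: power2_eq_square algebra_simps)

lemma cauchy_schwarz_sq: "cmod (B u v) ^ 2 \<le> Re (B u u) * Re (B v v)"
proof -
  define b where "b = B u v"
  have quadratic: "0 \<le> Re (B u u) - 2 * t * cmod b ^ 2 + t\<^sup>2 * cmod b ^ 2 * Re (B v v)"
    for t :: real
    using Re_self_nonneg Re_self_diff_scaleC unfolding b_def by metis
  show ?thesis
  proof (cases "Re (B v v) = 0")
    case True
    show ?thesis
    proof (cases "b = 0")
      case False
      then show ?thesis
        using quadratic[of "(Re (B u u) + 1) / (2 * cmod b ^ 2)"] True by (simp add: field_simps)
    qed (simp add: b_def Re_self_nonneg)
  next
    case False
    then have "0 < Re (B v v)" using Re_self_nonneg[of v] by simp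
    then show ?thesis
      using quadratic[of "1 / Re (B v v)"] by (simp add: b_def field_simps power2_eq_square)
  qed
qed

lemma cauchy_schwarz: "cmod (B u v) \<le> sqrt (Re (B u u)) * sqrt (Re (B v v))"
  by (metis cauchy_schwarz_sq real_le_rsqrt real_sqrt_mult norm_ge_zero)

lemma triangle: "sqrt (Re (B (u + v) (u + v))) \<le> sqrt (Re (B u u)) + sqrt (Re (B v v))"
proof -
  have "Re (B (u + v) (u + v)) = Re (B u u) + 2 * Re (B u v) + Re (B v v)"
    by (simp add: add_left add_right conj_sym[of u v])
  also have "\<dots> \<le> Re (B u u) + 2 * (sqrt (Re (B u u)) * sqrt (Re (B v v))) + Re (B v v)"
    using cauchy_schwarz[of u v] complex_Re_le_cmod[of "B u v"] by linarith
  also have "\<dots> = (sqrt (Re (B u u)) + sqrt (Re (B v v)))\<^sup>2"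
    using Re_self_nonneg by (simp add: power2_eq_square algebra_simps)
  finally show ?thesis by (intro real_le_lsqrt) (simp_all add: Re_self_nonneg)
qed

lemma buzano_inequality:
  assumes "B e e = 1"
  shows "2 * cmod (B a e * B e b) \<le> sqrt (Re (B a a)) * sqrt (Re (B b b)) + cmod (B a b)"
proof -
  define w where "w = b - scaleC (2 * B b e) e"
  have "B w w = B b b"
    unfolding w_def self_diff_scaleC assms by (simp add: algebra_simps)
  have "2 * (B a e * B e b) = B a b - B a w"
    by (simp add: w_def diff_right scaleC_right conj_sym[of e b])
  then have "2 * cmod (B a e * B e b) = cmod (B a b - B a w)"
    by (metis norm_mult norm_numeral)
  also have "\<dots> \<le> cmod (B a b) + cmod (B a w)" by (rule norm_triangle_ineq4)
  also have "\<dots> \<le> cmod (B a b) + sqrt (Re (B a a)) * sqrt (Re (B b b))"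
    using cauchy_schwarz[of a w] \<open>B w w = B b b\<close> by simp
  finally show ?thesis by simp
qed

end

interpretation cinner: hermitian_form cinner
  by unfold_locales (auto simp: cinner_add_left cinner_scaleC_left cinner_ge_zero
      intro: cinner_commute)

lemma scaleC_zero_right [simp]: "scaleC c (0::'a::complex_inner) = 0"
  using scaleC_add_right[of c 0 0] by simp

lemma bounded_clinear_scaleC: "bounded_clinear T \<Longrightarrow> T (scaleC c x) = scaleC c (T x)"
  unfolding bounded_clinear_def by blast

lemma bounded_clinear_linear: "bounded_clinear T \<Longrightarrow> linear T"
  unfolding bounded_clinear_def using bounded_linear.linear by blast

lemma positive_op_selfadjoint:
  assumes "positive_op A"
  shows "cinner (A x) y = cinner x (A y)"
proof -
  have lin: "linear A" and scaleC: "\<And>c u. A (scaleC c u) = scaleC c (A u)"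
    using assms bounded_clinear_linear bounded_clinear_scaleC unfolding positive_op_def by blast+
  have real: "Im (cinner (A u) u) = 0" for u
    using assms unfolding positive_op_def by blast
  define a b where "a = cinner (A x) y" and "b = cinner (A y) x"
  have "cinner (A (x + y)) (x + y) = cinner (A x) x + a + b + cinner (A y) y"
    by (simp add: a_def b_def linear_add[OF lin] cinner.add_left cinner.add_right)
  then have "Im a + Im b = 0" using real[of "x + y"] real[of x] real[of y] by simp
  moreover have "cinner (A (x + scaleC \<i> y)) (x + scaleC \<i> y)
      = cinner (A x) x - \<i> * a + \<i> * b + cinner (A y) y"
    by (simp add: a_def b_def linear_add[OF lin] scaleC cinner.add_left cinner.add_right
        cinner_scaleC_left cinner.scaleC_right algebra_simps)
  then have "Re b - Re a = 0" using real[of "x + scaleC \<i> y"] real[of x] real[of y] by simp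
  ultimately have "a = cnj b" by (simp add: complex_eq_iff)
  then show ?thesis by (simp add: a_def b_def cinner_commute[of x])
qed

lemma hermitian_form_innerA:
  assumes "positive_op A"
  shows "hermitian_form (innerA A)"
proof
  have lin: "linear A" and scaleC: "\<And>c u. A (scaleC c u) = scaleC c (A u)"
    using assms bounded_clinear_linear bounded_clinear_scaleC unfolding positive_op_def by blast+
  show "innerA A (u + v) w = innerA A u w + innerA A v w" for u v w
    by (simp add: innerA_def linear_add[OF lin] cinner.add_left)
  show "innerA A (scaleC c u) w = c * innerA A u w" for c u w
    by (simp add: innerA_def scaleC cinner_scaleC_left)
  show "innerA A v u = cnj (innerA A u v)" for u v
    by (simp add: innerA_def positive_op_selfadjoint[OF assms, of v] cinner_commute[of v])
  show "0 \<le> Re (innerA A u u)" for u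
    using assms by (simp add: innerA_def positive_op_def)
qed

lemma normA_eq_sqrt: "normA A x = sqrt (Re (innerA A x x))"
  by (simp add: normA_def innerA_def)

lemma innerA_cong_left: "A u = A u' \<Longrightarrow> innerA A u v = innerA A u' v"
  by (simp add: innerA_def)

section \<open>Projection theorem, Riesz representation and the \<open>A\<close>-adjoint\<close>

lemma norm_power2_cinner: "norm x ^ 2 = Re (cinner x x)"
  by (simp add: norm_eq_sqrt_cinner cinner_ge_zero)

lemma bounded_linear_cinner_left: "bounded_linear (\<lambda>x. cinner x y)"
proof (rule bounded_linear_intro[where K = "norm y"])
  show "cinner (x + z) y = cinner x y + cinner z y" for x z
    by (rule cinner_add_left)
  show "cinner (r *\<^sub>R x) y = r *\<^sub>R cinner x y" for r x
    by (simp add: scaleR_scaleC cinner_scaleC_left scaleR_conv_of_real)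
  show "norm (cinner x y) \<le> norm x * norm y" for x
    using cinner.cauchy_schwarz by (simp add: norm_eq_sqrt_cinner)
qed

lemma parallelogram_law:
  "norm (a + b) ^ 2 + norm (a - b) ^ 2 = 2 * norm (a::'a::complex_inner) ^ 2 + 2 * norm b ^ 2"
  by (simp add: norm_power2_cinner cinner.add_left cinner.add_right cinner.diff_left
      cinner.diff_right)

lemma minimizing_sequence_Cauchy:
  fixes m :: "nat \<Rightarrow> 'a::complex_inner"
  assumes "convex M" and m_in: "\<And>j. m j \<in> M"
    and D_le: "\<And>v. v \<in> M \<Longrightarrow> D \<le> norm (x - v) ^ 2"
    and m_close: "\<And>j. norm (x - m j) ^ 2 \<le> D + 1 / Suc j"
  shows "Cauchy m"
proof (rule CauchyI)
  have dist: "norm (m i - m j) ^ 2 \<le> 2 / Suc i + 2 / Suc j" for i j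
  proof -
    define mid where "mid = (1/2) *\<^sub>R m i + (1/2) *\<^sub>R m j"
    have "mid \<in> M" using convexD[OF \<open>convex M\<close> m_in m_in] by (simp add: mid_def)
    have "(x - m i) + (x - m j) = 2 *\<^sub>R (x - mid)"
      by (simp add: mid_def algebra_simps scaleR_2 flip: scaleR_add_right)
    then have "norm ((x - m i) + (x - m j)) ^ 2 = 4 * norm (x - mid) ^ 2"
      by (simp add: power2_eq_square)
    then have "4 * D \<le> norm ((x - m i) + (x - m j)) ^ 2"
      using D_le[OF \<open>mid \<in> M\<close>] by simp
    moreover have "norm ((x - m i) - (x - m j)) ^ 2 = norm (m i - m j) ^ 2"
      by (simp add: norm_minus_commute)
    ultimately have "norm (m i - m j) ^ 2 \<le> 2 * (1 / Suc i) + 2 * (1 / Suc j)"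
      using parallelogram_law[of "x - m i" "x - m j"] m_close[of i] m_close[of j] by linarith
    then show ?thesis by simp
  qed
  fix e :: real
  assume "0 < e"
  obtain N :: nat where "4 / e\<^sup>2 < N" using reals_Archimedean2 by blast
  then have "4 / Suc N < e\<^sup>2"
    using \<open>0 < e\<close> by (simp add: field_simps) (smt (verit) zero_le_power2)
  have "norm (m i - m j) < e" if "N \<le> i" "N \<le> j" for i j
  proof -
    have "2 / Suc i \<le> 2 / Suc N" "2 / Suc j \<le> 2 / Suc N"
      using that by (simp_all add: frac_le)
    then have "norm (m i - m j) ^ 2 < e\<^sup>2" using dist[of i j] \<open>4 / Suc N < e\<^sup>2\<close> by linarith
    then show ?thesis using \<open>0 < e\<close> by (simp add: power_less_imp_less_base)
  qed
  then show "\<exists>N. \<forall>i\<ge>N. \<forall>j\<ge>N. norm (m i - m j) < e" by blast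
qed

lemma exists_nearest_point:
  fixes M :: "'a::chilbert_space set"
  assumes "closed M" and "convex M" and "M \<noteq> {}"
  shows "\<exists>m\<in>M. \<forall>v\<in>M. norm (x - m) \<le> norm (x - v)"
proof -
  define D where "D = Inf ((\<lambda>v. norm (x - v) ^ 2) ` M)"
  have D_le: "D \<le> norm (x - v) ^ 2" if "v \<in> M" for v
    unfolding D_def using that by (intro cInf_lower bdd_belowI[of _ 0]) auto
  have "\<exists>v\<in>M. norm (x - v) ^ 2 < D + 1 / Suc j" for j
    using cInf_lessD[of "(\<lambda>v. norm (x - v) ^ 2) ` M" "D + 1 / Suc j"] \<open>M \<noteq> {}\<close>
    unfolding D_def by auto
  then obtain m where m_in: "\<And>j. m j \<in> M" and m_close: "\<And>j. norm (x - m j) ^ 2 < D + 1 / Suc j"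
    by metis
  have "Cauchy m"
    using m_close
    by (intro minimizing_sequence_Cauchy[OF \<open>convex M\<close> m_in D_le]) (auto intro: less_imp_le)
  then obtain l where "m \<longlonglongrightarrow> l" using Cauchy_convergent_iff convergent_def by blast
  have "l \<in> M" using closed_sequentially[OF \<open>closed M\<close> m_in \<open>m \<longlonglongrightarrow> l\<close>] .
  have "(\<lambda>j. norm (x - m j) ^ 2) \<longlonglongrightarrow> norm (x - l) ^ 2"
    by (intro tendsto_intros \<open>m \<longlonglongrightarrow> l\<close>)
  moreover have "(\<lambda>j. D + 1 / Suc j) \<longlonglongrightarrow> D + 0"
    by (intro tendsto_add tendsto_const LIMSEQ_Suc[OF lim_inverse_n'])
  moreover have "\<exists>N. \<forall>j\<ge>N. norm (x - m j) ^ 2 \<le> D + 1 / Suc j"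
    by (intro exI[of _ 0] allI impI order_less_imp_le m_close)
  ultimately have "norm (x - l) ^ 2 \<le> D + 0"
    by (rule LIMSEQ_le)
  then have "norm (x - l) \<le> norm (x - v)" if "v \<in> M" for v
    using D_le[OF that] by (smt (verit) power2_le_imp_le norm_ge_zero)
  then show ?thesis using \<open>l \<in> M\<close> by blast
qed

lemma nearest_point_orthogonal:
  fixes M :: "'a::complex_inner set"
  assumes "subspace M" and scaleC_in: "\<And>c v. v \<in> M \<Longrightarrow> scaleC c v \<in> M"
    and "m \<in> M" and nearest: "\<And>v. v \<in> M \<Longrightarrow> norm (x - m) \<le> norm (x - v)" and "v \<in> M"
  shows "cinner (x - m) v = 0"
proof (rule ccontr)
  define b where "b = cinner (x - m) v"
  assume "b \<noteq> 0"
  define t :: real where "t = 1 / (norm v ^ 2 + 1)"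
  have "0 < norm v ^ 2 + 1" by (simp add: add_nonneg_pos)
  then have "0 < t" and "t * norm v ^ 2 < 1" by (simp_all add: t_def field_simps)
  have "m + scaleC (of_real t * b) v \<in> M"
    using \<open>subspace M\<close> \<open>m \<in> M\<close> scaleC_in[OF \<open>v \<in> M\<close>] by (simp add: subspace_add)
  then have "norm (x - m) ^ 2 \<le> norm ((x - m) - scaleC (of_real t * b) v) ^ 2"
    using nearest by (simp add: diff_diff_eq power_mono)
  also have "\<dots> = norm (x - m) ^ 2 - 2 * t * cmod b ^ 2 + t\<^sup>2 * cmod b ^ 2 * norm v ^ 2"
    unfolding norm_power2_cinner b_def by (rule cinner.Re_self_diff_scaleC)
  finally have "t * cmod b ^ 2 * 2 \<le> t * cmod b ^ 2 * (t * norm v ^ 2)"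
    by (simp add: power2_eq_square algebra_simps)
  then have "2 \<le> t * norm v ^ 2" using \<open>0 < t\<close> \<open>b \<noteq> 0\<close> by simp
  then show False using \<open>t * norm v ^ 2 < 1\<close> by simp
qed

lemma kernel_orthogonal_decomposition:
  fixes f :: "'a::chilbert_space \<Rightarrow> 'b::real_normed_vector"
  assumes "bounded_linear f" and "\<And>c v. f v = 0 \<Longrightarrow> f (scaleC c v) = 0"
  shows "\<exists>m. f m = 0 \<and> (\<forall>v. f v = 0 \<longrightarrow> cinner (x - m) v = 0)"
proof -
  define M where "M = {u. f u = 0}"
  have "closed M"
    unfolding M_def using assms(1) by (intro closed_Collect_eq linear_continuous_on continuous_on_const)
  have "subspace M"
    unfolding M_def using assms(1) bounded_linear.linear linear_subspace_kernel by blast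
  then have "convex M" and "M \<noteq> {}" using subspace_imp_convex subspace_0 by blast+
  then obtain m where "m \<in> M" and "\<forall>v\<in>M. norm (x - m) \<le> norm (x - v)"
    using exists_nearest_point[OF \<open>closed M\<close>] by blast
  then show ?thesis
    using nearest_point_orthogonal[OF \<open>subspace M\<close>] assms(2) unfolding M_def by blast
qed

lemma riesz_representation:
  fixes g :: "'a::chilbert_space \<Rightarrow> complex"
  assumes "bounded_linear g" and g_scaleC: "\<And>c u. g (scaleC c u) = c * g u"
  shows "\<exists>z. \<forall>u. g u = cinner u z"
proof (cases "\<forall>u. g u = 0")
  case False
  then obtain u0 where "g u0 \<noteq> 0" by blast
  have lin: "linear g" using \<open>bounded_linear g\<close> bounded_linear.linear by blast
  obtain m where "g m = 0" and orth: "\<forall>v. g v = 0 \<longrightarrow> cinner (u0 - m) v = 0"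
    using kernel_orthogonal_decomposition[OF \<open>bounded_linear g\<close>] g_scaleC by fastforce
  define w where "w = u0 - m"
  have "g w \<noteq> 0" using \<open>g u0 \<noteq> 0\<close> \<open>g m = 0\<close> by (simp add: w_def linear_diff[OF lin])
  then have "cinner w w \<noteq> 0" using cinner_eq_zero_iff linear_0[OF lin] by metis
  have "g u = cinner u (scaleC (cnj (g w / cinner w w)) w)" for u
  proof -
    have "g (scaleC (g u) w - scaleC (g w) u) = 0"
      by (simp add: linear_diff[OF lin] g_scaleC)
    then have "cinner w (scaleC (g u) w - scaleC (g w) u) = 0" using orth w_def by blast
    then have "g u * cinner w w - g w * cinner u w = 0"
      by (metis cinner.conj_sym cinner.diff_left cinner_scaleC_left complex_cnj_zero_iff)
    then show ?thesis
      using \<open>cinner w w \<noteq> 0\<close> by (simp add: cinner.scaleC_right field_simps)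
  qed
  then show ?thesis by blast
qed (auto intro: exI[of _ 0])

lemma cinner_adj:
  fixes T :: "'a::chilbert_space \<Rightarrow> 'a"
  assumes "bounded_clinear T"
  shows "cinner (T u) y = cinner u (adj T y)"
proof -
  have "\<exists>z. \<forall>u. cinner (T u) y = cinner u z" for y
  proof (rule riesz_representation)
    show "bounded_linear (\<lambda>u. cinner (T u) y)"
      using assms bounded_linear_compose[OF bounded_linear_cinner_left]
      unfolding bounded_clinear_def by blast
    show "cinner (T (scaleC c u)) y = c * cinner (T u) y" for c u
      by (simp add: bounded_clinear_scaleC[OF assms] cinner_scaleC_left)
  qed
  then obtain F where F: "\<forall>u y. cinner (T u) y = cinner u (F y)" by metis
  have "G = F" if "\<forall>u y. cinner (T u) y = cinner u (G y)" for G
  proof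
    fix y
    have "cinner (G y - F y) (G y - F y) = 0"
      using that F by (simp add: cinner.diff_right)
    then show "G y = F y" by (simp add: cinner_eq_zero_iff)
  qed
  then have "adj T = F" unfolding adj_def using F by (intro the_equality) auto
  then show ?thesis using F by simp
qed

lemma A_mp_inv_A:
  fixes A :: "'a::chilbert_space \<Rightarrow> 'a"
  assumes "bounded_clinear A"
  shows "A (mp_inv A (A w)) = A w"
proof -
  have lin: "linear A" using assms by (rule bounded_clinear_linear)
  obtain m where "A m = 0" and orth: "\<forall>v. A v = 0 \<longrightarrow> cinner (w - m) v = 0"
    using kernel_orthogonal_decomposition[of A w] assms bounded_clinear_scaleC[OF assms]
    unfolding bounded_clinear_def by fastforce
  define P where "P x \<longleftrightarrow> (\<forall>z. A z = 0 \<longrightarrow> cinner x z = 0) \<and> A x = A w" for x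
  have "P (w - m)" using orth \<open>A m = 0\<close> by (simp add: P_def linear_diff[OF lin])
  moreover have "x = w - m" if "P x" for x
  proof -
    have "A (x - (w - m)) = 0"
      using that \<open>P (w - m)\<close> by (simp add: P_def linear_diff[OF lin])
    then have "cinner (x - (w - m)) (x - (w - m)) = 0"
      using that \<open>P (w - m)\<close> unfolding P_def by (simp add: cinner.diff_left)
    then show ?thesis by (simp add: cinner_eq_zero_iff)
  qed
  ultimately have "P (mp_inv A (A w))"
    unfolding mp_inv_def P_def[symmetric] by (rule theI)
  then show ?thesis by (simp add: P_def)
qed

lemma A_sharpA:
  fixes A T W :: "'a::chilbert_space \<Rightarrow> 'a"
  assumes "positive_op A" and "bounded_clinear T"
    and W: "\<And>x y. innerA A (T x) y = innerA A x (W y)"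
  shows "A (sharpA A T x) = A (W x)"
proof -
  have "cinner u (adj T (A x)) = cinner u (A (W x))" for u
  proof -
    have "cinner u (adj T (A x)) = cinner (A (T u)) x"
      by (simp add: cinner_adj[OF assms(2), symmetric] positive_op_selfadjoint[OF assms(1)])
    also have "\<dots> = innerA A u (W x)" by (simp add: W flip: innerA_def)
    also have "\<dots> = cinner u (A (W x))"
      by (simp add: innerA_def positive_op_selfadjoint[OF assms(1)])
    finally show ?thesis .
  qed
  then have "cinner (adj T (A x) - A (W x)) (adj T (A x) - A (W x)) = 0"
    by (simp add: cinner.diff_right)
  then have "adj T (A x) = A (W x)" by (simp add: cinner_eq_zero_iff)
  then show ?thesis
    using A_mp_inv_A assms(1) unfolding positive_op_def sharpA_def by metis
qed

section \<open>The \<open>A\<close>-seminorm and \<open>A\<close>-bounded operators\<close>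

lemma norm_funpow_le:
  fixes R :: "'a::real_normed_vector \<Rightarrow> 'a"
  assumes "\<And>y. norm (R y) \<le> K * norm y" and "0 \<le> K"
  shows "norm ((R ^^ N) y) \<le> K ^ N * norm y"
proof (induction N)
  case (Suc N)
  have "norm ((R ^^ Suc N) y) \<le> K * norm ((R ^^ N) y)" by (simp add: assms(1))
  also have "\<dots> \<le> K * (K ^ N * norm y)" using Suc \<open>0 \<le> K\<close> by (rule mult_left_mono)
  finally show ?case by simp
qed simp

text \<open>Without this bound the suprema \<^const>\<open>opnormA\<close> and \<^const>\<open>numradA\<close> are taken over sets
  that need not be bounded above, where \<^const>\<open>Sup\<close> says nothing.\<close>

definition A_bounded :: "('a::complex_inner \<Rightarrow> 'a) \<Rightarrow> ('a \<Rightarrow> 'a) \<Rightarrow> bool" where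
  "A_bounded A T \<longleftrightarrow> (\<exists>c\<ge>0. \<forall>x. normA A (T x) \<le> c * normA A x)"

lemma A_bounded_comp:
  assumes "A_bounded A T" and "A_bounded A U"
  shows "A_bounded A (T \<circ> U)"
proof -
  obtain c d where "0 \<le> c" and c: "\<And>x. normA A (T x) \<le> c * normA A x"
    and "0 \<le> d" and d: "\<And>x. normA A (U x) \<le> d * normA A x"
    using assms unfolding A_bounded_def by blast
  have "normA A (T (U x)) \<le> (c * d) * normA A x" for x
    using order_trans[OF c mult_left_mono[OF d \<open>0 \<le> c\<close>]] by (simp add: mult_ac)
  then show ?thesis
    unfolding A_bounded_def using \<open>0 \<le> c\<close> \<open>0 \<le> d\<close> by (intro exI[of _ "c * d"]) simp
qed

lemma A_bounded_funpow: "A_bounded A T \<Longrightarrow> A_bounded A (T ^^ n)"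
proof (induction n)
  case 0
  show ?case unfolding A_bounded_def by (intro exI[of _ 1]) simp
qed (simp add: A_bounded_comp)

context
  fixes A :: "'a::complex_inner \<Rightarrow> 'a"
  assumes A_pos: "positive_op A"
begin

interpretation innerA: hermitian_form "innerA A"
  by (rule hermitian_form_innerA[OF A_pos])

lemma innerA_cong_right: "A v = A v' \<Longrightarrow> innerA A u v = innerA A u v'"
  by (metis innerA.conj_sym innerA_cong_left)

lemma normA_cong: "A u = A u' \<Longrightarrow> normA A u = normA A u'"
  by (metis normA_eq_sqrt innerA_cong_left innerA_cong_right)

lemma normA_nonneg: "0 \<le> normA A x"
  by (simp add: normA_eq_sqrt innerA.Re_self_nonneg)

lemma normA_power2: "normA A x ^ 2 = Re (innerA A x x)"
  by (simp add: normA_eq_sqrt innerA.Re_self_nonneg)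

lemma cmod_innerA_le: "cmod (innerA A u v) \<le> normA A u * normA A v"
  unfolding normA_eq_sqrt by (rule innerA.cauchy_schwarz)

lemma Re_innerA_le: "Re (innerA A u v) \<le> normA A u * normA A v"
  using complex_Re_le_cmod cmod_innerA_le order_trans by blast

lemma Re_innerA_power2_le: "Re (innerA A u v) ^ 2 \<le> normA A u ^ 2 * normA A v ^ 2"
proof -
  have "\<bar>Re (innerA A u v)\<bar> \<le> normA A u * normA A v"
    using abs_Re_le_cmod cmod_innerA_le order_trans by blast
  then show ?thesis by (metis power2_abs power_mono abs_ge_zero power_mult_distrib)
qed

lemma innerA_adjoint_sym:
  assumes "\<And>u v. innerA A (X u) v = innerA A u (Y v)"
  shows "innerA A (Y u) v = innerA A u (X v)"
proof -
  have "innerA A (Y u) v = cnj (innerA A v (Y u))" by (rule innerA.conj_sym)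
  also have "\<dots> = innerA A u (X v)" by (simp add: innerA.conj_sym[of u] flip: assms)
  finally show ?thesis .
qed

lemma buzano_innerA:
  assumes "normA A e = 1"
  shows "4 * cmod (innerA A a e * innerA A e b)
    \<le> normA A a ^ 2 + normA A b ^ 2 + 2 * cmod (innerA A a b)"
proof -
  have "innerA A e e = 1"
    using assms innerA.self_eq_Re[of e] normA_power2[of e] by simp
  then have "2 * cmod (innerA A a e * innerA A e b) \<le> normA A a * normA A b + cmod (innerA A a b)"
    unfolding normA_eq_sqrt by (rule innerA.buzano_inequality)
  moreover have "2 * (normA A a * normA A b) \<le> normA A a ^ 2 + normA A b ^ 2"
    using sum_squares_bound[of "normA A a" "normA A b"] by simp
  ultimately show ?thesis by linarith
qed

lemma normA_add_le: "normA A (u + v) \<le> normA A u + normA A v"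
  unfolding normA_eq_sqrt by (rule innerA.triangle)

lemma normA_le_norm: "\<exists>C\<ge>0. \<forall>u. normA A u \<le> C * norm u"
proof -
  obtain K where "0 < K" and "\<And>x. norm (A x) \<le> norm x * K"
    using A_pos bounded_linear.pos_bounded unfolding positive_op_def bounded_clinear_def by blast
  have "normA A u \<le> sqrt K * norm u" for u
  proof -
    have "Re (innerA A u u) \<le> norm (A u) * norm u"
      unfolding innerA_def using complex_Re_le_cmod cinner.cauchy_schwarz[of "A u" u]
      by (metis norm_eq_sqrt_cinner order_trans)
    also have "\<dots> \<le> (norm u * K) * norm u"
      using \<open>norm (A u) \<le> norm u * K\<close> by (simp add: mult_right_mono)
    also have "\<dots> = (sqrt K * norm u)\<^sup>2"
      using \<open>0 < K\<close> by (simp add: power_mult_distrib power2_eq_square)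
    finally show ?thesis
      unfolding normA_eq_sqrt using \<open>0 < K\<close> by (intro real_le_lsqrt) simp_all
  qed
  then show ?thesis using \<open>0 < K\<close> by (intro exI[of _ "sqrt K"]) simp
qed

lemma ex_normA_eq_1:
  assumes "A \<noteq> (\<lambda>x. 0)"
  shows "\<exists>x. normA A x = 1"
proof -
  obtain y where "A y \<noteq> 0" using assms by blast
  then have "cmod (innerA A y (A y)) \<noteq> 0" by (simp add: innerA_def cinner_eq_zero_iff)
  then have "normA A y \<noteq> 0" using cmod_innerA_le[of y "A y"] by auto
  then have "0 < normA A y" using normA_nonneg[of y] by simp
  have "innerA A (scaleR r y) (scaleR r y) = of_real (r\<^sup>2) * innerA A y y" for r
    by (simp add: scaleR_scaleC innerA.scaleC_left innerA.scaleC_right power2_eq_square)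
  then have "normA A (scaleR r y) = \<bar>r\<bar> * normA A y" for r
    by (simp add: normA_eq_sqrt real_sqrt_mult)
  then have "normA A (scaleR (1 / normA A y) y) = 1"
    using \<open>0 < normA A y\<close> by simp
  then show ?thesis by blast
qed

lemma A_bounded_add:
  assumes "A_bounded A T" and "A_bounded A U"
  shows "A_bounded A (\<lambda>x. T x + U x)"
proof -
  obtain c d where "0 \<le> c" and c: "\<And>x. normA A (T x) \<le> c * normA A x"
    and "0 \<le> d" and d: "\<And>x. normA A (U x) \<le> d * normA A x"
    using assms unfolding A_bounded_def by blast
  have "normA A (T x + U x) \<le> (c + d) * normA A x" for x
    using normA_add_le[of "T x" "U x"] c[of x] d[of x] by (simp add: algebra_simps)
  then show ?thesis
    unfolding A_bounded_def using \<open>0 \<le> c\<close> \<open>0 \<le> d\<close> by (intro exI[of _ "c + d"]) simp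
qed

lemma A_bounded_sum:
  "(\<And>i. i \<in> I \<Longrightarrow> A_bounded A (T i)) \<Longrightarrow> A_bounded A (\<lambda>x. \<Sum>i\<in>I. T i x)"
proof (induction I rule: infinite_finite_induct)
  case (insert i I)
  then show ?case using A_bounded_add[of "T i" "\<lambda>x. \<Sum>i\<in>I. T i x"] by simp
qed (auto simp: A_bounded_def normA_def)

lemma Re_innerA_le_opnormA:
  assumes "A_bounded A T" and "normA A x = 1"
  shows "Re (innerA A (T x) x) \<le> opnormA A T"
proof -
  obtain c where c: "\<And>x. normA A (T x) \<le> c * normA A x"
    using assms(1) unfolding A_bounded_def by blast
  then have "normA A (T y) \<le> c" if "normA A y = 1" for y
    using that by (metis mult.right_neutral)
  then have "bdd_above {normA A (T x) | x. normA A x = 1}"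
    unfolding bdd_above_def by blast
  have "Re (innerA A (T x) x) \<le> normA A (T x)" using Re_innerA_le[of "T x" x] assms(2) by simp
  also have "\<dots> \<le> opnormA A T"
    unfolding opnormA_def using assms(2) \<open>bdd_above _\<close> by (intro cSup_upper) auto
  finally show ?thesis .
qed

lemma cmod_innerA_le_numradA:
  assumes "A_bounded A T" and "normA A x = 1"
  shows "cmod (innerA A (T x) x) \<le> numradA A T"
proof -
  obtain c where c: "\<And>x. normA A (T x) \<le> c * normA A x"
    using assms(1) unfolding A_bounded_def by blast
  have "cmod (innerA A (T y) y) \<le> c" if "normA A y = 1" for y
    using cmod_innerA_le[of "T y" y] c[of y] that by simp
  then have "bdd_above {cmod (innerA A (T x) x) | x. normA A x = 1}"
    unfolding bdd_above_def by blast
  then show ?thesis unfolding numradA_def using assms(2) by (intro cSup_upper) auto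
qed

lemma innerA_funpow_selfadjoint:
  assumes "\<And>u v. innerA A (R u) v = innerA A u (R v)"
  shows "innerA A ((R ^^ j) u) v = innerA A u ((R ^^ j) v)"
proof (induction j arbitrary: u v)
  case (Suc j)
  have "innerA A ((R ^^ Suc j) u) v = innerA A ((R ^^ j) u) (R v)" by (simp add: assms)
  also have "\<dots> = innerA A u ((R ^^ Suc j) v)" by (simp add: Suc funpow_swap1)
  finally show ?case .
qed simp

lemma normA_power_le_funpow:
  assumes selfadjoint: "\<And>u v. innerA A (R u) v = innerA A u (R v)"
  shows "normA A (R x) ^ (2 ^ j) \<le> normA A x ^ (2 ^ j - 1) * normA A ((R ^^ (2 ^ j)) x)"
proof (induction j)
  case (Suc j)
  define N :: nat where "N = 2 ^ j"
  have "1 \<le> N" by (simp add: N_def)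
  have "normA A ((R ^^ N) x) ^ 2 = Re (innerA A x ((R ^^ (2 * N)) x))"
    by (simp add: normA_power2 innerA_funpow_selfadjoint[OF selfadjoint] mult_2 funpow_add)
  also have "\<dots> \<le> normA A x * normA A ((R ^^ (2 * N)) x)" by (rule Re_innerA_le)
  finally have step: "normA A ((R ^^ N) x) ^ 2 \<le> normA A x * normA A ((R ^^ (2 * N)) x)" .
  have "normA A (R x) ^ (2 * N) = (normA A (R x) ^ N) ^ 2" by (simp add: power_mult mult.commute)
  also have "\<dots> \<le> (normA A x ^ (N - 1) * normA A ((R ^^ N) x)) ^ 2"
    using Suc.IH by (intro power_mono) (simp_all add: N_def normA_nonneg)
  also have "\<dots> = (normA A x ^ (N - 1)) ^ 2 * normA A ((R ^^ N) x) ^ 2"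
    by (simp add: power_mult_distrib)
  also have "\<dots> \<le> (normA A x ^ (N - 1)) ^ 2 * (normA A x * normA A ((R ^^ (2 * N)) x))"
    using step by (intro mult_left_mono) simp_all
  also have "\<dots> = normA A x ^ (2 * N - 1) * normA A ((R ^^ (2 * N)) x)"
  proof -
    have exp: "2 * N - 1 = Suc ((N - 1) * 2)" using \<open>1 \<le> N\<close> by simp
    show ?thesis unfolding exp power_Suc power_mult by (simp add: mult_ac)
  qed
  finally show ?case by (simp add: N_def)
qed simp

text \<open>Lax's argument: iterating Cauchy--Schwarz gives
  \<open>\<parallel>Rx\<parallel>\<^sub>A^(2^j) \<le> \<parallel>x\<parallel>\<^sub>A^(2^j-1) \<parallel>R^(2^j) x\<parallel>\<^sub>A
    \<le> \<parallel>x\<parallel>\<^sub>A^(2^j-1) C K^(2^j) \<parallel>x\<parallel>\<close>,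
  and the constant \<open>C\<close> comparing \<open>\<parallel>_\<parallel>\<^sub>A\<close> with \<open>\<parallel>_\<parallel>\<close>
  disappears in the \<open>2^j\<close>-th root.\<close>

lemma normA_le_if_selfadjoint:
  assumes selfadjoint: "\<And>u v. innerA A (R u) v = innerA A u (R v)"
    and bounded: "\<And>y. norm (R y) \<le> K * norm y" and "0 < K"
  shows "normA A (R x) \<le> K * normA A x"
proof -
  define a nx where "a = normA A (R x)" and "nx = normA A x"
  obtain C where "0 \<le> C" and C: "\<And>u. normA A u \<le> C * norm u" using normA_le_norm by blast
  have iterate: "a ^ N \<le> nx ^ (N - 1) * (C * (K ^ N * norm x))" if "N = 2 ^ j" for N j
  proof -
    have "normA A ((R ^^ N) x) \<le> C * norm ((R ^^ N) x)" by (rule C)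
    also have "\<dots> \<le> C * (K ^ N * norm x)"
      using norm_funpow_le[OF bounded] \<open>0 < K\<close> \<open>0 \<le> C\<close> by (simp add: mult_left_mono)
    finally have "normA A ((R ^^ N) x) \<le> C * (K ^ N * norm x)" .
    moreover have "a ^ N \<le> nx ^ (N - 1) * normA A ((R ^^ N) x)"
      unfolding a_def nx_def that by (rule normA_power_le_funpow[OF selfadjoint])
    ultimately show ?thesis
      using normA_nonneg[of x] unfolding nx_def by (meson mult_left_mono order_trans zero_le_power)
  qed
  consider "nx = 0" | "0 < nx" using normA_nonneg[of x] by (force simp: nx_def)
  then show ?thesis
  proof cases
    case 1
    then have "a ^ 2 \<le> 0" using iterate[of 2 1] by simp
    then show ?thesis using 1 by (simp add: a_def nx_def)
  next
    case 2
    have "(a / (K * nx)) ^ (2 ^ j) \<le> C * norm x / nx" for j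
    proof -
      define N :: nat where "N = 2 ^ j"
      have "nx ^ N = nx ^ (N - 1) * nx" by (simp add: N_def flip: power_Suc2)
      have "a ^ N * nx \<le> nx ^ (N - 1) * (C * (K ^ N * norm x)) * nx"
        using iterate[OF N_def] 2 by simp
      also have "\<dots> = (C * norm x) * (K ^ N * nx ^ N)"
        using \<open>nx ^ N = nx ^ (N - 1) * nx\<close> by (simp add: mult_ac)
      finally show ?thesis
        using 2 \<open>0 < K\<close> by (simp add: N_def power_divide power_mult_distrib field_simps)
    qed
    then have "a / (K * nx) \<le> 1" by (rule le_one_if_two_power_bounded)
    then show ?thesis using 2 \<open>0 < K\<close> by (simp add: a_def nx_def pos_divide_le_eq)
  qed
qed

lemma A_bounded_if_A_adjoint:
  assumes "bounded_linear X" and "bounded_linear Y"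
    and adjoint: "\<And>u v. innerA A (X u) v = innerA A u (Y v)"
  shows "A_bounded A X"
proof -
  obtain K where "0 < K" and K: "\<And>y. norm (Y (X y)) \<le> norm y * K"
    using bounded_linear.pos_bounded[OF bounded_linear_compose[OF assms(2,1)]] by auto
  note adjoint_sym = innerA_adjoint_sym[OF adjoint]
  have "innerA A (Y (X u)) v = innerA A u (Y (X v))" for u v
    by (simp add: adjoint adjoint_sym)
  then have YX: "normA A (Y (X x)) \<le> K * normA A x" for x
    using normA_le_if_selfadjoint[of "\<lambda>x. Y (X x)" K] K \<open>0 < K\<close> by (simp add: mult.commute)
  have "normA A (X x) \<le> sqrt K * normA A x" for x
  proof -
    have "normA A (X x) ^ 2 \<le> normA A x * normA A (Y (X x))"
      using Re_innerA_le by (simp add: normA_power2 adjoint)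
    also have "\<dots> \<le> normA A x * (K * normA A x)"
      using YX normA_nonneg by (simp add: mult_left_mono)
    also have "\<dots> = (sqrt K * normA A x) ^ 2"
      using \<open>0 < K\<close> by (simp add: power2_eq_square)
    finally show ?thesis
      by (rule power2_le_imp_le) (use \<open>0 < K\<close> normA_nonneg in simp)
  qed
  then show ?thesis
    unfolding A_bounded_def using \<open>0 < K\<close> by (intro exI[of _ "sqrt K"]) simp
qed

end

section \<open>The single-operator estimate\<close>

context
  fixes A X Y :: "'a::complex_inner \<Rightarrow> 'a"
  assumes A_pos: "positive_op A"
    and adjoint: "\<And>u v. innerA A (X u) v = innerA A u (Y v)"
begin

interpretation innerA: hermitian_form "innerA A"
  by (rule hermitian_form_innerA[OF A_pos])

lemma innerA_comp_selfadjoint: "innerA A ((Y \<circ> X) u) v = innerA A u ((Y \<circ> X) v)"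
  by (simp add: adjoint innerA_adjoint_sym[OF A_pos adjoint])

lemma innerA_funpow_even:
  "innerA A (((Y \<circ> X) ^^ (j + j)) x) x = innerA A (((Y \<circ> X) ^^ j) x) (((Y \<circ> X) ^^ j) x)"
proof -
  have "((Y \<circ> X) ^^ (j + j)) x = ((Y \<circ> X) ^^ j) (((Y \<circ> X) ^^ j) x)"
    by (simp add: funpow_add)
  then show ?thesis
    by (simp only: innerA_funpow_selfadjoint[OF A_pos innerA_comp_selfadjoint,
          of j "((Y \<circ> X) ^^ j) x"])
qed

lemma innerA_funpow_odd:
  "innerA A (((Y \<circ> X) ^^ Suc (j + j)) x) x
    = innerA A (X (((Y \<circ> X) ^^ j) x)) (X (((Y \<circ> X) ^^ j) x))"
proof -
  have "Suc (j + j) = j + Suc j" by simp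
  then have "((Y \<circ> X) ^^ Suc (j + j)) x = ((Y \<circ> X) ^^ j) (Y (X (((Y \<circ> X) ^^ j) x)))"
    by (simp only: funpow_add funpow.simps(2) comp_apply)
  then show ?thesis
    by (simp only: innerA_funpow_selfadjoint[OF A_pos innerA_comp_selfadjoint]
        innerA_adjoint_sym[OF A_pos adjoint])
qed

lemma innerA_funpow_self:
  "innerA A (((Y \<circ> X) ^^ m) x) x = of_real (Re (innerA A (((Y \<circ> X) ^^ m) x) x))"
  "0 \<le> Re (innerA A (((Y \<circ> X) ^^ m) x) x)"
proof -
  have "\<exists>j. m = j + j \<or> m = Suc (j + j)" by presburger
  then obtain j where "m = j + j \<or> m = Suc (j + j)" by blast
  then show "innerA A (((Y \<circ> X) ^^ m) x) x = of_real (Re (innerA A (((Y \<circ> X) ^^ m) x) x))"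
    and "0 \<le> Re (innerA A (((Y \<circ> X) ^^ m) x) x)"
    using innerA_funpow_even innerA_funpow_odd innerA.self_eq_Re innerA.Re_self_nonneg by metis+
qed

lemma Re_innerA_funpow_log_convex:
  "Re (innerA A (((Y \<circ> X) ^^ Suc m) x) x) ^ 2
    \<le> Re (innerA A (((Y \<circ> X) ^^ m) x) x) * Re (innerA A (((Y \<circ> X) ^^ Suc (Suc m)) x) x)"
proof -
  define g where "g k = Re (innerA A (((Y \<circ> X) ^^ k) x) x)" for k
  have "\<exists>j. m = j + j \<or> m = Suc (j + j)" by presburger
  then obtain j where parity: "m = j + j \<or> m = Suc (j + j)" by blast
  define w where "w = ((Y \<circ> X) ^^ j) x"
  have "\<exists>u v. g m = normA A u ^ 2 \<and> g (Suc (Suc m)) = normA A v ^ 2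
      \<and> g (Suc m) = Re (innerA A u v)"
  proof (cases "m = j + j")
    case True
    have "g m = normA A w ^ 2"
      by (simp add: True g_def w_def normA_power2[OF A_pos] innerA_funpow_even)
    moreover have "g (Suc (Suc m)) = normA A (Y (X w)) ^ 2"
      using innerA_funpow_even[of "Suc j" x] True
      by (simp add: g_def w_def normA_power2[OF A_pos])
    moreover have "g (Suc m) = Re (innerA A w (Y (X w)))"
      using innerA_funpow_odd[of j x] by (simp add: True g_def w_def flip: adjoint)
    ultimately show ?thesis by blast
  next
    case False
    then have m: "m = Suc (j + j)" using parity by blast
    have "g m = normA A (X w) ^ 2"
      using innerA_funpow_odd[of j x] by (simp add: m g_def w_def normA_power2[OF A_pos])
    moreover have "g (Suc (Suc m)) = normA A (X (Y (X w))) ^ 2"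
      using innerA_funpow_odd[of "Suc j" x] m
      by (simp add: g_def w_def normA_power2[OF A_pos])
    moreover have "g (Suc m) = Re (innerA A (X w) (X (Y (X w))))"
      using innerA_funpow_even[of "Suc j" x] m
      by (simp add: g_def w_def innerA_adjoint_sym[OF A_pos adjoint])
    ultimately show ?thesis by blast
  qed
  then show ?thesis
    unfolding g_def[symmetric] using Re_innerA_power2_le[OF A_pos] by (metis mult.commute)
qed

lemma Re_innerA_power_le_funpow:
  assumes "normA A x = 1"
  shows "Re (innerA A ((Y \<circ> X) x) x) ^ n \<le> Re (innerA A (((Y \<circ> X) ^^ n) x) x)"
proof -
  have "Re (innerA A x x) = 1" using assms normA_power2[OF A_pos, of x] by simp
  then show ?thesis
    using log_convex_power_le[of "\<lambda>m. Re (innerA A (((Y \<circ> X) ^^ m) x) x)"]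
      innerA_funpow_self(2) Re_innerA_funpow_log_convex by simp
qed

lemma cmod_innerA_power_le_funpow:
  assumes "normA A x = 1"
  shows "cmod (innerA A (X x) x) ^ (2 * n) \<le> Re (innerA A (((Y \<circ> X) ^^ n) x) x)"
proof -
  have "cmod (innerA A (X x) x) \<le> normA A (X x)"
    using cmod_innerA_le[OF A_pos, of "X x" x] assms by simp
  then have "cmod (innerA A (X x) x) ^ 2 \<le> normA A (X x) ^ 2" by (simp add: power_mono)
  also have "\<dots> = Re (innerA A ((Y \<circ> X) x) x)"
    by (simp add: normA_power2[OF A_pos] innerA_adjoint_sym[OF A_pos adjoint])
  finally have "(cmod (innerA A (X x) x) ^ 2) ^ n \<le> Re (innerA A ((Y \<circ> X) x) x) ^ n"
    by (simp add: power_mono)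
  also have "\<dots> \<le> Re (innerA A (((Y \<circ> X) ^^ n) x) x)"
    using assms by (rule Re_innerA_power_le_funpow)
  finally show ?thesis by (simp add: power_mult)
qed

end

lemma cmod_innerA_power_estimate:
  fixes A X Y :: "'a::complex_inner \<Rightarrow> 'a"
  assumes A_pos: "positive_op A" and adjoint: "\<And>u v. innerA A (X u) v = innerA A u (Y v)"
    and "normA A x = 1"
  shows "cmod (innerA A (X x) x) ^ (4 * n)
    \<le> 1 / 4 * (Re (innerA A (((Y \<circ> X) ^^ (2 * n)) x) x)
      + Re (innerA A (((X \<circ> Y) ^^ (2 * n)) x) x)
      + 2 * cmod (innerA A ((((Y \<circ> X) ^^ n) \<circ> ((X \<circ> Y) ^^ n)) x) x))"
proof -
  interpret innerA: hermitian_form "innerA A" by (rule hermitian_form_innerA[OF A_pos])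
  note adjoint_sym = innerA_adjoint_sym[OF A_pos adjoint]
  define a b where "a = ((Y \<circ> X) ^^ n) x" and "b = ((X \<circ> Y) ^^ n) x"
  have "innerA A (Y x) x = cnj (innerA A (X x) x)"
    by (simp add: adjoint_sym innerA.conj_sym[of x])
  then have "cmod (innerA A (X x) x) ^ (4 * n)
      = cmod (innerA A (X x) x) ^ (2 * n) * cmod (innerA A (Y x) x) ^ (2 * n)"
    by (simp flip: power_add)
  also have "\<dots> \<le> Re (innerA A a x) * Re (innerA A b x)"
    unfolding a_def b_def using \<open>normA A x = 1\<close>
    by (intro mult_mono cmod_innerA_power_le_funpow[OF A_pos adjoint]
        cmod_innerA_power_le_funpow[OF A_pos adjoint_sym] innerA_funpow_self(2)[OF A_pos adjoint])
      simp_all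
  also have "\<dots> = cmod (innerA A a x * innerA A x b)"
  proof -
    have "cmod (innerA A a x) = Re (innerA A a x)" "cmod (innerA A b x) = Re (innerA A b x)"
      unfolding a_def b_def
      using innerA_funpow_self[OF A_pos adjoint, of n x] innerA_funpow_self[OF A_pos adjoint_sym, of n x]
      by (metis norm_of_real abs_of_nonneg)+
    then show ?thesis by (simp add: norm_mult innerA.conj_sym[of b x])
  qed
  also have "\<dots> \<le> 1 / 4 * (normA A a ^ 2 + normA A b ^ 2 + 2 * cmod (innerA A a b))"
    using buzano_innerA[OF A_pos \<open>normA A x = 1\<close>, of a b] by simp
  also have "\<dots> = 1 / 4 * (Re (innerA A (((Y \<circ> X) ^^ (2 * n)) x) x)
      + Re (innerA A (((X \<circ> Y) ^^ (2 * n)) x) x)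
      + 2 * cmod (innerA A ((((Y \<circ> X) ^^ n) \<circ> ((X \<circ> Y) ^^ n)) x) x))"
  proof -
    have "innerA A a b = innerA A x (((Y \<circ> X) ^^ n) b)"
      unfolding a_def
      by (rule innerA_funpow_selfadjoint[OF A_pos innerA_comp_selfadjoint[OF A_pos adjoint]])
    also have "\<dots> = cnj (innerA A ((((Y \<circ> X) ^^ n) \<circ> ((X \<circ> Y) ^^ n)) x) x)"
      unfolding b_def o_apply[of "(Y \<circ> X) ^^ n"] by (rule innerA.conj_sym)
    finally have "cmod (innerA A a b) = cmod (innerA A ((((Y \<circ> X) ^^ n) \<circ> ((X \<circ> Y) ^^ n)) x) x)"
      by simp
    moreover have "normA A a ^ 2 = Re (innerA A (((Y \<circ> X) ^^ (2 * n)) x) x)"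
      unfolding a_def normA_power2[OF A_pos] mult_2 innerA_funpow_even[OF A_pos adjoint] ..
    moreover have "normA A b ^ 2 = Re (innerA A (((X \<circ> Y) ^^ (2 * n)) x) x)"
      unfolding b_def normA_power2[OF A_pos] mult_2 innerA_funpow_even[OF A_pos adjoint_sym] ..
    ultimately show ?thesis by simp
  qed
  finally show ?thesis .
qed

section \<open>Operators with an \<open>A\<close>-adjoint\<close>

context
  fixes A T :: "'a::chilbert_space \<Rightarrow> 'a"
  assumes A_pos: "positive_op A" and T: "T \<in> BA A"
begin

lemma innerA_sharpA: "innerA A (T u) v = innerA A u (sharpA A T v)"
proof -
  obtain W where "bounded_clinear T" and W: "\<And>x y. innerA A (T x) y = innerA A x (W y)"
    using T unfolding BA_def by blast
  show ?thesis
    using W innerA_cong_right[OF A_pos A_sharpA[OF A_pos \<open>bounded_clinear T\<close> W]] by metis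
qed

lemma A_bounded_BA: "A_bounded A T" and A_bounded_sharpA: "A_bounded A (sharpA A T)"
proof -
  obtain W where "bounded_clinear T" and "bounded_clinear W"
    and W: "\<And>x y. innerA A (T x) y = innerA A x (W y)"
    using T unfolding BA_def by blast
  then have "bounded_linear T" and "bounded_linear W" unfolding bounded_clinear_def by blast+
  then show "A_bounded A T" by (rule A_bounded_if_A_adjoint[OF A_pos _ _ W])
  have "A_bounded A W"
    by (rule A_bounded_if_A_adjoint[OF A_pos \<open>bounded_linear W\<close> \<open>bounded_linear T\<close>
          innerA_adjoint_sym[OF A_pos W]])
  then show "A_bounded A (sharpA A T)"
    unfolding A_bounded_def using normA_cong[OF A_pos A_sharpA[OF A_pos \<open>bounded_clinear T\<close> W]]
    by simp
qed

end

lemma numradA_power_le: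
  assumes "positive_op A" and "A \<noteq> (\<lambda>x. 0)" and "0 < m"
    and bound: "\<And>x. normA A x = 1 \<Longrightarrow> cmod (innerA A (T x) x) ^ m \<le> R"
  shows "numradA A T ^ m \<le> R"
  unfolding numradA_def
  using ex_normA_eq_1[OF assms(1,2)] \<open>0 < m\<close> bound by (intro cSup_power_le) auto

lemma cmod_innerA_sum_power_estimate:
  fixes A :: "'a::chilbert_space \<Rightarrow> 'a" and S :: "'i \<Rightarrow> 'a \<Rightarrow> 'a"
  assumes A_pos: "positive_op A" and "finite I" and S: "\<And>i. i \<in> I \<Longrightarrow> S i \<in> BA A"
    and "0 < n" and "normA A x = 1"
  defines "T \<equiv> \<lambda>x. \<Sum>i\<in>I. ((sharpA A (S i) \<circ> S i) ^^ (2 * n)) x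
                          + ((S i \<circ> sharpA A (S i)) ^^ (2 * n)) x"
    and "N \<equiv> \<lambda>i. ((sharpA A (S i) \<circ> S i) ^^ n) \<circ> ((S i \<circ> sharpA A (S i)) ^^ n)"
  shows "cmod (innerA A (\<Sum>i\<in>I. S i x) x) ^ (4 * n)
    \<le> real (card I) ^ (4 * n - 1) / 4 * (opnormA A T + 2 * (\<Sum>i\<in>I. numradA A (N i)))"
proof -
  interpret innerA: hermitian_form "innerA A" by (rule hermitian_form_innerA[OF A_pos])
  define t where "t i = cmod (innerA A (S i x) x)" for i
  have bounded: "A_bounded A (sharpA A (S i))" "A_bounded A (S i)" if "i \<in> I" for i
    using A_bounded_sharpA A_bounded_BA A_pos S[OF that] by blast+
  have "cmod (innerA A (\<Sum>i\<in>I. S i x) x) \<le> (\<Sum>i\<in>I. t i)"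
    unfolding t_def innerA.sum_left by (rule norm_sum)
  then have "cmod (innerA A (\<Sum>i\<in>I. S i x) x) ^ (4 * n) \<le> (\<Sum>i\<in>I. t i) ^ (4 * n)"
    by (simp add: power_mono)
  also have "\<dots> \<le> real (card I) ^ (4 * n - 1) * (\<Sum>i\<in>I. t i ^ (4 * n))"
    using \<open>finite I\<close> \<open>0 < n\<close> by (intro sum_power_le_card_power_sum) auto
  also have "(\<Sum>i\<in>I. t i ^ (4 * n))
      \<le> 1 / 4 * (Re (innerA A (T x) x) + 2 * (\<Sum>i\<in>I. cmod (innerA A (N i x) x)))"
  proof -
    have "(\<Sum>i\<in>I. t i ^ (4 * n))
        \<le> (\<Sum>i\<in>I. 1 / 4 * (Re (innerA A (((sharpA A (S i) \<circ> S i) ^^ (2 * n)) x) x)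
          + Re (innerA A (((S i \<circ> sharpA A (S i)) ^^ (2 * n)) x) x) + 2 * cmod (innerA A (N i x) x)))"
      unfolding t_def N_def
      by (intro sum_mono
          cmod_innerA_power_estimate[OF A_pos innerA_sharpA[OF A_pos S] \<open>normA A x = 1\<close>])
    also have "\<dots> = 1 / 4 * (Re (innerA A (T x) x) + 2 * (\<Sum>i\<in>I. cmod (innerA A (N i x) x)))"
      by (simp add: T_def innerA.sum_left innerA.add_left sum.distrib sum_distrib_left algebra_simps)
    finally show ?thesis .
  qed
  also have "\<dots> \<le> 1 / 4 * (opnormA A T + 2 * (\<Sum>i\<in>I. numradA A (N i)))"
  proof -
    have "A_bounded A T"
      unfolding T_def using bounded A_pos
      by (intro A_bounded_sum A_bounded_add A_bounded_funpow A_bounded_comp) auto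
    then have "Re (innerA A (T x) x) \<le> opnormA A T"
      using Re_innerA_le_opnormA[OF A_pos _ \<open>normA A x = 1\<close>] by blast
    moreover have "cmod (innerA A (N i x) x) \<le> numradA A (N i)" if "i \<in> I" for i
      unfolding N_def using bounded[OF that] \<open>normA A x = 1\<close>
      by (intro cmod_innerA_le_numradA[OF A_pos] A_bounded_comp A_bounded_funpow)
    then have "(\<Sum>i\<in>I. cmod (innerA A (N i x) x)) \<le> (\<Sum>i\<in>I. numradA A (N i))"
      by (rule sum_mono)
    ultimately show ?thesis by simp
  qed
  finally show ?thesis by (simp add: mult_left_mono)
qed

theorem theorem3p10:
  fixes A :: "'a::chilbert_space \<Rightarrow> 'a"
    and S :: "nat \<Rightarrow> 'a \<Rightarrow> 'a"
    and k n :: nat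
  assumes "positive_op A" and "A \<noteq> (\<lambda>x. 0)"
    and "k \<ge> 1"
    and "\<And>i. i \<in> {1..k} \<Longrightarrow> S i \<in> BA A"
    and "n \<ge> 1"
  shows "(numradA A (\<lambda>x. \<Sum>i=1..k. S i x)) ^ (4*n)
    \<le> real k ^ (4*n - 1) / 4 *
      (opnormA A (\<lambda>x. \<Sum>i=1..k. ((sharpA A (S i) \<circ> S i) ^^ (2*n)) x
                                   + ((S i \<circ> sharpA A (S i)) ^^ (2*n)) x)
       + 2 * (\<Sum>i=1..k. numradA A (((sharpA A (S i) \<circ> S i) ^^ n)
                                     \<circ> ((S i \<circ> sharpA A (S i)) ^^ n))))"
  using cmod_innerA_sum_power_estimate[where I = "{1..k}" and S = S, OF assms(1) _ assms(4)] \<open>n \<ge> 1\<close>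
  by (intro numradA_power_le[OF assms(1,2)]) simp_all

end
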